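(* For any partition $\lambda$ with at most $n$ parts and $x=(x_1,\dots,x_n)\in\mathbb{C}^n$, $$W_{\lambda}(x_1^{-1},\dots,x_n^{-1};q^{-1},p,t^{-1},a^{-1},b^{-1})=a^{-2|\lambda|}b^{2|\lambda|}q^{2|\lambda|}t^{2n(\lambda)-2(n-1)|\lambda|}\,W_{\lambda}(x_1,\dots,x_n;q,p,t,a,b),$$ where $|\lambda|=\sum_i\lambda_i$ and $n(\lambda)=\sum_i(i-1)\lambda_i$.
   Context: Fix $|p|<1$; parameters generic. $E(x)=(x;p)_\infty(p/x;p)_\infty$. For integer $m\ge0$, $(a)_m=(a;q,p)_m=\prod_{k=0}^{m-1}E(aq^k)$, for $m<0$, $(a)_m=1/(aq^m)_{-m}$; for a partition $\lambda$ with $n$ parts $(a)_\lambda=\prod_{i=1}^n(at^{1-i})_{\lambda_i}$; several arguments denote products; integer subscripts denote the single-integer symbol. When $W$ is evaluated with $q,t$ replaced by $q^{-1},t^{-1}$, all these symbols are formed with base $q^{-1}$ and $t^{-1}$. For $n$-part partitions with $\lambda_1\ge\mu_1\ge\dots\ge\lambda_n\ge\mu_n$, $\lambda_{n+1}=\mu_{n+1}=0$, $H_{\lambda/\mu}(q,p,t,b)=\prod_{1\le i<j\le n}\Big\{\frac{(q^{\mu_i-\mu_{j-1}}t^{j-i})_{\mu_{j-1}-\lambda_j}(q^{\lambda_i+\lambda_j}t^{3-j-i}b)_{\mu_{j-1}-\lambda_j}}{(q^{\mu_i-\mu_{j-1}+1}t^{j-i-1})_{\mu_{j-1}-\lambda_j}(q^{\lambda_i+\lambda_j+1}t^{2-j-i}b)_{\mu_{j-1}-\lambda_j}}\frac{(q^{\lambda_i-\mu_{j-1}+1}t^{j-i-1})_{\mu_{j-1}-\lambda_j}}{(q^{\lambda_i-\mu_{j-1}}t^{j-i})_{\mu_{j-1}-\lambda_j}}\Big\}\prod_{1\le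 i<j-1\le n}\frac{(q^{\mu_i+\lambda_j+1}t^{1-j-i}b)_{\mu_{j-1}-\lambda_j}}{(q^{\mu_i+\lambda_j}t^{2-j-i}b)_{\mu_{j-1}-\lambda_j}}$; for $x\in\mathbb{C}$, $W_{\lambda/\mu}(x;q,p,t,a,b)=H_{\lambda/\mu}\frac{(x^{-1},ax)_\lambda(qbx/t,qb/(axt))_\mu}{(x^{-1},ax)_\mu(qbx,qb/(ax))_\lambda}\prod_{i=1}^n\frac{E(bt^{1-2i}q^{2\mu_i})}{E(bt^{1-2i})}\frac{(bt^{1-2i})_{\mu_i+\lambda_{i+1}}}{(bqt^{-2i})_{\mu_i+\lambda_{i+1}}}t^{i(\mu_i-\lambda_{i+1})}$ (zero if the interlacing fails); recursively $W_{\lambda/\mu}(y,z_1,\dots,z_\ell;q,p,t,a,b)=\sum_\nu W_{\lambda/\nu}(yt^{-\ell};q,p,t,at^{2\ell},bt^\ell)W_{\nu/\mu}(z_1,\dots,z_\ell;q,p,t,a,b)$ over $\nu$ with $\lambda_1\ge\nu_1\ge\dots\ge\lambda_n\ge\nu_n\ge0$; $W_\lambda=W_{\lambda/0}$. *)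

theory Defs
  imports "HOL-Analysis.Analysis"
begin

definition qpinf :: "complex \<Rightarrow> complex \<Rightarrow> complex" where
  "qpinf x p = prodinf (\<lambda>k. 1 - x * p ^ k)"

definition Eth :: "complex \<Rightarrow> complex \<Rightarrow> complex" where
  "Eth p x = qpinf x p * qpinf (p / x) p"

definition ell :: "complex \<Rightarrow> complex \<Rightarrow> complex \<Rightarrow> int \<Rightarrow> complex" where
  "ell q p a m =
     (if 0 \<le> m then (\<Prod>k<nat m. Eth p (a * q ^ k))
      else 1 / (\<Prod>k<nat (- m). Eth p (a * q powi (m + int k))))"

definition npart :: "nat \<Rightarrow> (nat \<Rightarrow> nat) \<Rightarrow> bool" where
  "npart n la = ((\<forall>i. (i = 0 \<or> n < i) \<longrightarrow> la i = 0) \<and> (\<forall>i. 1 \<le> i \<and> i < n \<longrightarrow> la (Suc i) \<le> la i))"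

definition interlace :: "nat \<Rightarrow> (nat \<Rightarrow> nat) \<Rightarrow> (nat \<Rightarrow> nat) \<Rightarrow> bool" where
  "interlace n la mu = (npart n la \<and> (\<forall>i. (i = 0 \<or> n < i) \<longrightarrow> mu i = 0) \<and>
      (\<forall>i. 1 \<le> i \<and> i \<le> n \<longrightarrow> la (Suc i) \<le> mu i \<and> mu i \<le> la i))"

definition ellp :: "nat \<Rightarrow> complex \<Rightarrow> complex \<Rightarrow> complex \<Rightarrow> complex \<Rightarrow> (nat \<Rightarrow> nat) \<Rightarrow> complex" where
  "ellp n q p t a la = (\<Prod>i\<in>{1..n}. ell q p (a * t powi (1 - int i)) (int (la i)))"

definition Hfac :: "nat \<Rightarrow> complex \<Rightarrow> complex \<Rightarrow> complex \<Rightarrow> complex \<Rightarrow> (nat \<Rightarrow> nat) \<Rightarrow> (nat \<Rightarrow> nat) \<Rightarrow> complex" where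
  "Hfac n q p t b la mu =
    (\<Prod>i\<in>{1..n}. \<Prod>j\<in>{i+1..n}.
       (let L = (\<lambda>k. int (la k)); M = (\<lambda>k. int (mu k)); I = int i; J = int j;
            d = M (j - 1) - L j
        in ell q p (q powi (M i - M (j - 1)) * t powi (J - I)) d
           * ell q p (q powi (L i + L j) * t powi (3 - J - I) * b) d
           / (ell q p (q powi (M i - M (j - 1) + 1) * t powi (J - I - 1)) d
              * ell q p (q powi (L i + L j + 1) * t powi (2 - J - I) * b) d)
           * ell q p (q powi (L i - M (j - 1) + 1) * t powi (J - I - 1)) d
           / ell q p (q powi (L i - M (j - 1)) * t powi (J - I)) d))
   * (\<Prod>i\<in>{1..n}. \<Prod>j\<in>{i+2..n+1}.
       (let L = (\<lambda>k. int (la k)); M = (\<lambda>k. int (mu k)); I = int i; J = int j;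
            d = M (j - 1) - L j
        in ell q p (q powi (M i + L j + 1) * t powi (1 - J - I) * b) d
           / ell q p (q powi (M i + L j) * t powi (2 - J - I) * b) d))"

definition W1 :: "nat \<Rightarrow> complex \<Rightarrow> complex \<Rightarrow> complex \<Rightarrow> complex \<Rightarrow> complex \<Rightarrow> (nat \<Rightarrow> nat) \<Rightarrow> (nat \<Rightarrow> nat) \<Rightarrow> complex \<Rightarrow> complex" where
  "W1 n q p t a b la mu x =
    (if interlace n la mu then
       Hfac n q p t b la mu
       * ellp n q p t (inverse x) la * ellp n q p t (a * x) la
       * ellp n q p t (q * b * x / t) mu * ellp n q p t (q * b / (a * x * t)) mu
       / (ellp n q p t (inverse x) mu * ellp n q p t (a * x) mu
          * ellp n q p t (q * b * x) la * ellp n q p t (q * b / (a * x)) la)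
       * (\<Prod>i\<in>{1..n}.
           Eth p (b * t powi (1 - 2 * int i) * q powi (2 * int (mu i))) / Eth p (b * t powi (1 - 2 * int i))
           * ell q p (b * t powi (1 - 2 * int i)) (int (mu i) + int (la (Suc i)))
           / ell q p (b * q * t powi (- 2 * int i)) (int (mu i) + int (la (Suc i)))
           * t powi (int i * (int (mu i) - int (la (Suc i)))))
     else 0)"

fun Wl :: "nat \<Rightarrow> complex \<Rightarrow> complex \<Rightarrow> complex \<Rightarrow> complex \<Rightarrow> complex \<Rightarrow> complex list \<Rightarrow> (nat \<Rightarrow> nat) \<Rightarrow> (nat \<Rightarrow> nat) \<Rightarrow> complex" where
  "Wl n q p t a b [] la mu = (if la = mu then 1 else 0)"
| "Wl n q p t a b (y # zs) la mu =
     (\<Sum>nu\<in>{nu. interlace n la nu}.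
        W1 n q p t (a * t ^ (2 * length zs)) (b * t ^ length zs) la nu (y * t powi (- int (length zs)))
        * Wl n q p t a b zs nu mu)"

definition generic :: "complex \<Rightarrow> complex \<Rightarrow> complex \<Rightarrow> complex \<Rightarrow> complex \<Rightarrow> complex list \<Rightarrow> bool" where
  "generic p q t a b xs =
    (q \<noteq> 0 \<and> t \<noteq> 0 \<and> a \<noteq> 0 \<and> b \<noteq> 0 \<and> (\<forall>x\<in>set xs. x \<noteq> 0) \<and>
     (\<forall>(k::int) (l::int) (\<alpha>::int) (\<beta>::int) (\<gamma>::nat \<Rightarrow> int) (m::int).
        (k \<noteq> 0 \<or> l \<noteq> 0 \<or> \<alpha> \<noteq> 0 \<or> \<beta> \<noteq> 0 \<or> (\<exists>i<length xs. \<gamma> i \<noteq> 0)) \<longrightarrow>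
        q powi k * t powi l * a powi \<alpha> * b powi \<beta> * (\<Prod>i<length xs. (xs ! i) powi \<gamma> i) \<noteq> p powi m))"

end

theory Submission
  imports Defs
begin

text \<open>
  The theta function satisfies E(1/x) = -E(x)/x, so an elliptic shifted factorial in the
  inverted bases, (1/c; 1/q, p)_m, equals (c; q, p)_m times the elementary factor
  prod_{k<m} (-1/(c q^k)). Every factor of the one-variable W_{\<lambda>/\<mu>}(x) is a ratio of such
  symbols whose arguments differ by a monomial in q, t, a, b, x, and in such a ratio the
  elementary factors cancel up to a power of that monomial. Hence inverting all parameters
  multiplies W_{\<lambda>/\<mu>}(x) by a Laurent monomial in q, t, a, b depending only on |\<lambda>|, |\<mu>|,
  n(\<lambda>), n(\<mu>); the pair factors of H_{\<lambda>/\<mu>} contribute a telescoping product because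
  \<mu>_n = 0. In the branching rule the shifted parameters a t^(2l), b t^l change the t-exponent
  of this monomial exactly so that the monomials of consecutive steps telescope, and the
  theorem follows by induction on the number of variables.
\<close>

lemma powi_shift:
  fixes q t :: "'a::field"
  assumes "q \<noteq> 0" "t \<noteq> 0" "A' = A + 1" "B = B' + 1"
  shows "q powi A' * t powi B' = q powi A * t powi B * (q / t)"
  using assms by (simp add: power_int_add_1 field_simps)

lemma inverse_powi_mult:
  fixes q t c :: "'a::field"
  shows "inverse q powi A * inverse t powi B = inverse (q powi A * t powi B)"
    and "inverse (q powi A * t powi B) * inverse c = inverse (q powi A * t powi B * c)"
  by (simp_all add: power_int_inverse)

lemma divide_rearrange3:
  fixes a1 a2 a3 b1 b2 b3 :: "'a::field"
  shows "a1 * a2 / (b1 * b2) * b3 / a3 = (b3 / a3) / ((b1 / a1) * (b2 / a2))"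
  by (simp add: divide_inverse ac_simps)

lemma divide_rearrange4:
  fixes a1 a2 a3 a4 b1 b2 b3 b4 :: "'a::field"
  shows "a1 * a2 * a3 * a4 / (b3 * b4 * b1 * b2) = (a1 / b1) * (a2 / b2) * (a3 / b3) * (a4 / b4)"
  by (simp add: divide_inverse ac_simps)

definition laurent_monomial ::
    "complex \<Rightarrow> complex \<Rightarrow> complex \<Rightarrow> complex \<Rightarrow> int \<Rightarrow> int \<Rightarrow> int \<Rightarrow> int \<Rightarrow> complex" where
  "laurent_monomial q t a b i j k l = q powi i * t powi j * a powi k * b powi l"

lemma laurent_monomial_mult:
  assumes "q \<noteq> 0" "t \<noteq> 0" "a \<noteq> 0" "b \<noteq> 0"
  shows "laurent_monomial q t a b i j k l * laurent_monomial q t a b i' j' k' l'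
    = laurent_monomial q t a b (i + i') (j + j') (k + k') (l + l')"
  unfolding laurent_monomial_def using assms by (simp add: power_int_add ac_simps)

lemma laurent_monomial_power:
  "laurent_monomial q t a b i j k l ^ m = laurent_monomial q t a b (m * i) (m * j) (m * k) (m * l)"
  unfolding laurent_monomial_def by (simp add: power_mult_distrib power_int_power' ac_simps)

lemma laurent_monomial_prod:
  assumes "q \<noteq> 0" "t \<noteq> 0" "a \<noteq> 0" "b \<noteq> 0"
  shows "(\<Prod>x\<in>S. laurent_monomial q t a b (f x) (g x) (h x) (k x))
    = laurent_monomial q t a b (\<Sum>x\<in>S. f x) (\<Sum>x\<in>S. g x) (\<Sum>x\<in>S. h x) (\<Sum>x\<in>S. k x)"
proof (induction S rule: infinite_finite_induct)
  case (insert x F)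
  then show ?case
    by (simp add: laurent_monomial_mult[OF assms])
qed (simp_all add: laurent_monomial_def)

lemma laurent_monomial_shift:
  assumes "t \<noteq> 0" "a \<noteq> 0" "b \<noteq> 0"
  shows "laurent_monomial q t (a * t ^ r) (b * t ^ s) i j k l
    = laurent_monomial q t a b i (j + int r * k + int s * l) k l"
  unfolding laurent_monomial_def using assms
  by (simp add: power_int_mult_distrib power_int_power power_int_add ac_simps)

definition part_size :: "nat \<Rightarrow> (nat \<Rightarrow> nat) \<Rightarrow> nat" where
  "part_size n la = (\<Sum>i\<in>{1..n}. la i)"

definition part_n :: "nat \<Rightarrow> (nat \<Rightarrow> nat) \<Rightarrow> nat" where
  "part_n n la = (\<Sum>i\<in>{1..n}. (i - 1) * la i)"

lemma part_n_shift:
  assumes "la (Suc n) = 0"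
  shows "(\<Sum>i\<in>{1..n}. i * la (Suc i)) = part_n n la"
proof -
  have "(\<Sum>i\<in>{1..n}. i * la (Suc i)) = (\<Sum>i\<in>{1..Suc n}. (i - 1) * la i)"
    by (induction n) (simp_all add: sum.cl_ivl_Suc)
  then show ?thesis
    unfolding part_n_def using assms by simp
qed

lemma part_n_plus_size:
  "(\<Sum>i\<in>{1..n}. i * mu i) = part_n n mu + part_size n mu"
  unfolding part_n_def part_size_def sum.distrib[symmetric]
  by (intro sum.cong) (auto simp: algebra_simps)

lemma sum_shift_window:
  fixes d :: "nat \<Rightarrow> 'a::comm_monoid_add"
  assumes "i \<le> n"
  shows "(\<Sum>j\<in>{i+1..n}. d j) + d (n + 1) = d (i + 1) + (\<Sum>j\<in>{i+2..n+1}. d j)"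
proof -
  have "(\<Sum>j\<in>{i+1..n}. d j) + d (n + 1) = (\<Sum>j\<in>{i+1..n+1}. d j)"
    using assms by (simp add: sum.cl_ivl_Suc)
  also have "\<dots> = d (i + 1) + (\<Sum>j\<in>{i+2..n+1}. d j)"
    using assms by (subst sum.atLeast_Suc_atMost) (simp_all add: numeral_2_eq_2)
  finally show ?thesis .
qed

lemma interlace_le:
  assumes "interlace n la mu" "1 \<le> i" "i \<le> n"
  shows "la (Suc i) \<le> mu i" "mu i \<le> la i"
  using assms unfolding interlace_def by auto

section \<open>Inversion of theta functions and elliptic shifted factorials\<close>

lemma qpinf_convergent:
  fixes x p :: complex
  assumes "norm p < 1"
  shows "convergent_prod (\<lambda>k. 1 - x * p ^ k)"
proof -
  have "summable (\<lambda>k. norm x * norm p ^ k)"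
    using assms by (intro summable_mult summable_geometric) simp
  moreover have "norm ((1 - x * p ^ k) - 1) = norm x * norm p ^ k" for k
    by (simp add: norm_mult norm_power)
  ultimately have "summable (\<lambda>k. norm ((1 - x * p ^ k) - 1))"
    by presburger
  then show ?thesis
    by (intro abs_convergent_prod_imp_convergent_prod summable_imp_abs_convergent_prod)
qed

lemma qpinf_shift:
  assumes "norm p < 1"
  shows "qpinf x p = (1 - x) * qpinf (p * x) p"
proof -
  have "(\<lambda>k. 1 - x * p ^ k) has_prod ((\<Prod>k<1. 1 - x * p ^ k) * (\<Prod>k. 1 - x * p ^ (k + 1)))"
    using has_prod_ignore_initial_segment'[OF qpinf_convergent[OF assms]] by blast
  moreover have "(\<lambda>k. 1 - x * p ^ (k + 1)) = (\<lambda>k. 1 - (p * x) * p ^ k)"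
    by (simp add: algebra_simps)
  ultimately show ?thesis
    unfolding qpinf_def by (simp add: has_prod_unique[symmetric])
qed

lemma Eth_inverse:
  assumes "norm p < 1" "y \<noteq> 0"
  shows "Eth p (inverse y) = - inverse y * Eth p y"
proof -
  have "qpinf (inverse y) p = (1 - inverse y) * qpinf (p / y) p"
    using qpinf_shift[OF assms(1), of "inverse y"] by (simp add: divide_inverse mult.commute)
  moreover have "p / inverse y = p * y"
    by (simp add: divide_inverse)
  ultimately have "Eth p (inverse y) = (1 - inverse y) * qpinf (p / y) p * qpinf (p * y) p"
    unfolding Eth_def by simp
  then show ?thesis
    unfolding Eth_def qpinf_shift[OF assms(1), of y] using assms(2) by (simp add: field_simps)
qed

lemma Eth_inverse_ratio:
  assumes "norm p < 1" "c \<noteq> 0" "c' \<noteq> 0"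
  shows "Eth p (inverse c') / Eth p (inverse c) = (c / c') * (Eth p c' / Eth p c)"
proof -
  have "Eth p (inverse c') / Eth p (inverse c) = (inverse c' * Eth p c') / (inverse c * Eth p c)"
    using Eth_inverse[OF assms(1), of c'] Eth_inverse[OF assms(1), of c] assms by simp
  then show ?thesis
    using assms by (cases "Eth p c = 0") (simp_all add: field_simps)
qed

lemma ell_inverse:
  assumes "norm p < 1" "q \<noteq> 0" "c \<noteq> 0"
  shows "ell (inverse q) p (inverse c) (int m) = (\<Prod>k<m. - inverse (c * q ^ k)) * ell q p c (int m)"
proof -
  have "ell (inverse q) p (inverse c) (int m) = (\<Prod>k<m. Eth p (inverse (c * q ^ k)))"
    unfolding ell_def by (simp add: power_inverse)
  also have "\<dots> = (\<Prod>k<m. - inverse (c * q ^ k) * Eth p (c * q ^ k))"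
    using assms by (intro prod.cong refl Eth_inverse) auto
  finally show ?thesis
    unfolding ell_def prod.distrib by simp
qed

lemma ell_inverse_ratio:
  assumes "norm p < 1" "q \<noteq> 0" "c \<noteq> 0" "c' \<noteq> 0"
  shows "ell (inverse q) p (inverse c') (int m) / ell (inverse q) p (inverse c) (int m)
    = (c / c') ^ m * (ell q p c' (int m) / ell q p c (int m))"
proof -
  define f where "f c = (\<Prod>k<m. - inverse (c * q ^ k))" for c
  have "f c' = (\<Prod>k<m. - inverse (c * q ^ k) * (c / c'))"
    unfolding f_def using assms by (intro prod.cong) (simp_all add: field_simps)
  also have "\<dots> = f c * (c / c') ^ m"
    unfolding f_def by (simp only: prod.distrib prod_constant card_lessThan)
  finally have "f c' = f c * (c / c') ^ m" .
  moreover have "f c \<noteq> 0"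
    unfolding f_def using assms by simp
  moreover have "ell (inverse q) p (inverse c') (int m) = f c' * ell q p c' (int m)"
    unfolding f_def using assms by (intro ell_inverse)
  moreover have "ell (inverse q) p (inverse c) (int m) = f c * ell q p c (int m)"
    unfolding f_def using assms by (intro ell_inverse)
  ultimately show ?thesis
    by (simp add: field_simps)
qed

lemma ellp_inverse_ratio:
  assumes "norm p < 1" "q \<noteq> 0" "t \<noteq> 0" "c \<noteq> 0" "c' \<noteq> 0"
  shows "ellp n (inverse q) p (inverse t) (inverse c') la / ellp n (inverse q) p (inverse t) (inverse c) la
    = (c / c') ^ part_size n la * (ellp n q p t c' la / ellp n q p t c la)"
proof -
  have "ell (inverse q) p (inverse c' * inverse t powi (1 - int i)) (int (la i))
        / ell (inverse q) p (inverse c * inverse t powi (1 - int i)) (int (la i))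
      = (c / c') ^ la i * (ell q p (c' * t powi (1 - int i)) (int (la i))
        / ell q p (c * t powi (1 - int i)) (int (la i)))" for i
    using ell_inverse_ratio[OF assms(1,2), of "c * t powi (1 - int i)" "c' * t powi (1 - int i)" "la i"] assms
    by (simp add: power_int_inverse)
  then show ?thesis
    unfolding ellp_def part_size_def prod_dividef[symmetric] power_sum prod.distrib[symmetric] by simp
qed

lemma ell_inverse_shift_ratio:
  assumes "norm p < 1" "q \<noteq> 0" "t \<noteq> 0" "u \<noteq> 0"
  shows "ell (inverse q) p (inverse (u * (q / t))) (int m) / ell (inverse q) p (inverse u) (int m)
    = (t / q) ^ m * (ell q p (u * (q / t)) (int m) / ell q p u (int m))"
proof -
  have "u * (q / t) \<noteq> 0"
    using assms by simp
  moreover have "u / (u * (q / t)) = t / q"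
    using assms by (simp add: field_simps)
  ultimately show ?thesis
    using ell_inverse_ratio[OF assms(1,2,4), where c' = "u * (q / t)"] by simp
qed

section \<open>The one-variable function\<close>

lemma Hfac_factor1_inverse:
  assumes p: "norm p < 1" and nz: "q \<noteq> 0" "t \<noteq> 0" "b \<noteq> 0" and "0 \<le> d"
  shows "ell (inverse q) p (inverse q powi A * inverse t powi (J - I)) d
       * ell (inverse q) p (inverse q powi B * inverse t powi (3 - J - I) * inverse b) d
       / (ell (inverse q) p (inverse q powi (A + 1) * inverse t powi (J - I - 1)) d
          * ell (inverse q) p (inverse q powi (B + 1) * inverse t powi (2 - J - I) * inverse b) d)
       * ell (inverse q) p (inverse q powi (C + 1) * inverse t powi (J - I - 1)) d
       / ell (inverse q) p (inverse q powi C * inverse t powi (J - I)) d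
     = (q / t) ^ nat d *
       (ell q p (q powi A * t powi (J - I)) d
       * ell q p (q powi B * t powi (3 - J - I) * b) d
       / (ell q p (q powi (A + 1) * t powi (J - I - 1)) d
          * ell q p (q powi (B + 1) * t powi (2 - J - I) * b) d)
       * ell q p (q powi (C + 1) * t powi (J - I - 1)) d
       / ell q p (q powi C * t powi (J - I)) d)"
proof -
  obtain m where d: "d = int m"
    using \<open>0 \<le> d\<close> nonneg_int_cases by metis
  define u1 u2 u3 where "u1 = q powi A * t powi (J - I)"
    and "u2 = q powi B * t powi (3 - J - I) * b" and "u3 = q powi C * t powi (J - I)"
  have shifted: "q powi (A + 1) * t powi (J - I - 1) = u1 * (q / t)"
    "q powi (B + 1) * t powi (2 - J - I) * b = u2 * (q / t)"
    "q powi (C + 1) * t powi (J - I - 1) = u3 * (q / t)"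
    unfolding u1_def u2_def u3_def
    using powi_shift[OF nz(1,2), of "A + 1" A "J - I" "J - I - 1"]
      powi_shift[OF nz(1,2), of "B + 1" B "3 - J - I" "2 - J - I"]
      powi_shift[OF nz(1,2), of "C + 1" C "J - I" "J - I - 1"]
    by (simp_all add: ac_simps)
  have "u1 \<noteq> 0" "u2 \<noteq> 0" "u3 \<noteq> 0"
    unfolding u1_def u2_def u3_def using nz by simp_all
  note ratios = ell_inverse_shift_ratio[OF p nz(1,2) this(1)]
    ell_inverse_shift_ratio[OF p nz(1,2) this(2)] ell_inverse_shift_ratio[OF p nz(1,2) this(3)]
  have cancel: "(s * x3) / ((s * x1) * (s * x2)) = inverse s * (x3 / (x1 * x2))"
    if "s \<noteq> 0" for s x1 x2 x3 :: complex
    using that by (simp add: field_simps)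
  have "(t / q) ^ m \<noteq> 0"
    using nz by simp
  show ?thesis
    unfolding d nat_int shifted inverse_powi_mult u1_def[symmetric]
      u2_def[symmetric] u3_def[symmetric] divide_rearrange3 ratios cancel[OF \<open>(t / q) ^ m \<noteq> 0\<close>]
    by (simp only: power_inverse[symmetric] inverse_divide)
qed

lemma Hfac_factor2_inverse:
  assumes p: "norm p < 1" and nz: "q \<noteq> 0" "t \<noteq> 0" "b \<noteq> 0" and "0 \<le> d"
  shows "ell (inverse q) p (inverse q powi (A + 1) * inverse t powi (1 - J - I) * inverse b) d
       / ell (inverse q) p (inverse q powi A * inverse t powi (2 - J - I) * inverse b) d
     = (t / q) ^ nat d *
       (ell q p (q powi (A + 1) * t powi (1 - J - I) * b) d
       / ell q p (q powi A * t powi (2 - J - I) * b) d)"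
proof -
  obtain m where d: "d = int m"
    using \<open>0 \<le> d\<close> nonneg_int_cases by metis
  define u where "u = q powi A * t powi (2 - J - I) * b"
  have "q powi (A + 1) * t powi (1 - J - I) * b = u * (q / t)"
    unfolding u_def using powi_shift[OF nz(1,2), of "A + 1" A "2 - J - I" "1 - J - I"]
    by (simp add: ac_simps)
  moreover have "u \<noteq> 0" "q / t \<noteq> 0"
    unfolding u_def using nz by simp_all
  ultimately show ?thesis
    using ell_inverse_shift_ratio[OF p nz(1,2), of u m]
    unfolding d nat_int inverse_powi_mult u_def[symmetric] by simp
qed

lemma Hfac_inverse:
  assumes p: "norm p < 1" and nz: "q \<noteq> 0" "t \<noteq> 0" "b \<noteq> 0"
    and il: "interlace n la mu" and "mu n = 0"
  shows "Hfac n (inverse q) p (inverse t) (inverse b) la mu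
    = (q / t) ^ (\<Sum>i\<in>{1..n}. mu i - la (Suc i)) * Hfac n q p t b la mu"
proof -
  define d where "d j = nat (int (mu (j - 1)) - int (la j))" for j
  have d_nonneg: "0 \<le> int (mu (j - 1)) - int (la j)" if "2 \<le> j" "j \<le> n + 1" for j
    using interlace_le(1)[OF il, of "j - 1"] that by (simp add: Suc_diff_1)
  have swap: "x * y * (u * v) = (x * u) * (y * v)" for x y u v :: complex
    by (simp only: mult_ac)
  have "Hfac n (inverse q) p (inverse t) (inverse b) la mu
    = (\<Prod>i\<in>{1..n}. \<Prod>j\<in>{i+1..n}. (q / t) ^ d j)
      * (\<Prod>i\<in>{1..n}. \<Prod>j\<in>{i+2..n+1}. (t / q) ^ d j) * Hfac n q p t b la mu"
    unfolding Hfac_def Let_def d_def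
    by (subst swap, rule arg_cong2[where f = "(*)"]; unfold prod.distrib[symmetric];
        intro prod.cong refl Hfac_factor1_inverse[OF p nz] Hfac_factor2_inverse[OF p nz] d_nonneg) auto
  also have "(\<Prod>j\<in>{i+1..n}. (q / t) ^ d j) * (\<Prod>j\<in>{i+2..n+1}. (t / q) ^ d j) = (q / t) ^ d (i + 1)"
    if "i \<in> {1..n}" for i
  proof -
    have "d (n + 1) = 0"
      using \<open>mu n = 0\<close> unfolding d_def by simp
    then have window: "(\<Sum>j\<in>{i+1..n}. d j) = d (i + 1) + (\<Sum>j\<in>{i+2..n+1}. d j)"
      using sum_shift_window[of i n d] that by simp
    have "(\<Prod>j\<in>{i+1..n}. (q / t) ^ d j) * (\<Prod>j\<in>{i+2..n+1}. (t / q) ^ d j)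
        = (q / t) ^ d (i + 1) * ((q / t) * (t / q)) ^ (\<Sum>j\<in>{i+2..n+1}. d j)"
      unfolding power_sum[symmetric] window power_add power_mult_distrib by (simp only: mult_ac)
    then show ?thesis
      using nz by simp
  qed
  then have "(\<Prod>i\<in>{1..n}. \<Prod>j\<in>{i+1..n}. (q / t) ^ d j)
      * (\<Prod>i\<in>{1..n}. \<Prod>j\<in>{i+2..n+1}. (t / q) ^ d j) = (q / t) ^ (\<Sum>i\<in>{1..n}. mu i - la (Suc i))"
    unfolding prod.distrib[symmetric] power_sum d_def nat_minus_as_int by (intro prod.cong) simp_all
  finally show ?thesis .
qed

definition W1_ellp_factor :: "nat \<Rightarrow> complex \<Rightarrow> complex \<Rightarrow> complex \<Rightarrow> complex \<Rightarrow> complex \<Rightarrow>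
    (nat \<Rightarrow> nat) \<Rightarrow> (nat \<Rightarrow> nat) \<Rightarrow> complex \<Rightarrow> complex" where
  "W1_ellp_factor n q p t a b la mu x =
     ellp n q p t (inverse x) la * ellp n q p t (a * x) la
     * ellp n q p t (q * b * x / t) mu * ellp n q p t (q * b / (a * x * t)) mu
     / (ellp n q p t (inverse x) mu * ellp n q p t (a * x) mu
        * ellp n q p t (q * b * x) la * ellp n q p t (q * b / (a * x)) la)"

definition W1_diag_factor :: "nat \<Rightarrow> complex \<Rightarrow> complex \<Rightarrow> complex \<Rightarrow> complex \<Rightarrow>
    (nat \<Rightarrow> nat) \<Rightarrow> (nat \<Rightarrow> nat) \<Rightarrow> complex" where
  "W1_diag_factor n q p t b la mu =
     (\<Prod>i\<in>{1..n}.
        Eth p (b * t powi (1 - 2 * int i) * q powi (2 * int (mu i))) / Eth p (b * t powi (1 - 2 * int i))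
        * ell q p (b * t powi (1 - 2 * int i)) (int (mu i) + int (la (Suc i)))
        / ell q p (b * q * t powi (- 2 * int i)) (int (mu i) + int (la (Suc i)))
        * t powi (int i * (int (mu i) - int (la (Suc i)))))"

lemma W1_factorization:
  "W1 n q p t a b la mu x =
    (if interlace n la mu
     then Hfac n q p t b la mu * W1_ellp_factor n q p t a b la mu x * W1_diag_factor n q p t b la mu
     else 0)"
  unfolding W1_def W1_ellp_factor_def W1_diag_factor_def by (simp add: ac_simps)

lemma W1_ellp_factor_inverse:
  assumes p: "norm p < 1" and nz: "q \<noteq> 0" "t \<noteq> 0" "a \<noteq> 0" "b \<noteq> 0" "x \<noteq> 0"
  shows "W1_ellp_factor n (inverse q) p (inverse t) (inverse a) (inverse b) la mu (inverse x)
    = laurent_monomial q t a b (2 * int (part_size n la) - 2 * int (part_size n mu)) (2 * int (part_size n mu))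
        (2 * int (part_size n mu) - 2 * int (part_size n la)) (2 * int (part_size n la) - 2 * int (part_size n mu))
      * W1_ellp_factor n q p t a b la mu x"
proof -
  \<comment> \<open>Stated in the shape met after rewriting: inner products are rewritten first.\<close>
  have args: "inverse a * inverse x = inverse (a * x)"
    "inverse q * inverse b * inverse x = inverse (q * b * x)"
    "inverse (q * b * x) / inverse t = inverse (q * b * x / t)"
    "inverse q * inverse b / (inverse (a * x) * inverse t) = inverse (q * b / (a * x * t))"
    "inverse q * inverse b / inverse (a * x) = inverse (q * b / (a * x))"
    by (simp_all add: field_simps)
  have c: "inverse x \<noteq> 0" "a * x \<noteq> 0" "q * b * x / t \<noteq> 0" "q * b / (a * x * t) \<noteq> 0"
    "q * b * x \<noteq> 0" "q * b / (a * x) \<noteq> 0"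
    using nz by simp_all
  note ratio = ellp_inverse_ratio[OF p nz(1,2)]
  have "W1_ellp_factor n (inverse q) p (inverse t) (inverse a) (inverse b) la mu (inverse x)
    = ((q * b * x) / inverse x) ^ part_size n la * ((q * b / (a * x)) / (a * x)) ^ part_size n la
      * (inverse x / (q * b * x / t)) ^ part_size n mu * ((a * x) / (q * b / (a * x * t))) ^ part_size n mu
      * W1_ellp_factor n q p t a b la mu x"
    unfolding W1_ellp_factor_def args divide_rearrange4 ratio[OF c(5,1)] ratio[OF c(6,2)]
      ratio[OF c(1,3)] ratio[OF c(2,4)]
    by (simp only: mult_ac)
  also have "((q * b * x) / inverse x) ^ part_size n la * ((q * b / (a * x)) / (a * x)) ^ part_size n la
      * (inverse x / (q * b * x / t)) ^ part_size n mu * ((a * x) / (q * b / (a * x * t))) ^ part_size n mu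
    = laurent_monomial q t a b 2 0 (-2) 2 ^ part_size n la
      * laurent_monomial q t a b (-2) 2 2 (-2) ^ part_size n mu"
  proof -
    have "((q * b * x) / inverse x) * ((q * b / (a * x)) / (a * x)) = laurent_monomial q t a b 2 0 (-2) 2"
      "(inverse x / (q * b * x / t)) * ((a * x) / (q * b / (a * x * t))) = laurent_monomial q t a b (-2) 2 2 (-2)"
      unfolding laurent_monomial_def using nz by (simp_all add: field_simps power2_eq_square power_int_minus)
    from this[symmetric] show ?thesis
      by (simp only: power_mult_distrib mult.assoc)
  qed
  also have "\<dots> = laurent_monomial q t a b
      (2 * int (part_size n la) - 2 * int (part_size n mu)) (2 * int (part_size n mu))
      (2 * int (part_size n mu) - 2 * int (part_size n la)) (2 * int (part_size n la) - 2 * int (part_size n mu))"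
    unfolding laurent_monomial_power laurent_monomial_mult[OF nz(1-4)] by (simp add: algebra_simps)
  finally show ?thesis .
qed

lemma W1_diag_term_inverse:
  assumes p: "norm p < 1" and nz: "q \<noteq> 0" "t \<noteq> 0" "a \<noteq> 0" "b \<noteq> 0"
  shows "Eth p (inverse b * inverse t powi (1 - 2 * int i) * inverse q powi (2 * int m))
           / Eth p (inverse b * inverse t powi (1 - 2 * int i))
         * ell (inverse q) p (inverse b * inverse t powi (1 - 2 * int i)) (int m + int l)
         / ell (inverse q) p (inverse b * inverse q * inverse t powi (- 2 * int i)) (int m + int l)
         * inverse t powi (int i * (int m - int l))
    = laurent_monomial q t a b (int l - int m) (- int m - int l - 2 * (int i * (int m - int l))) 0 0
      * (Eth p (b * t powi (1 - 2 * int i) * q powi (2 * int m)) / Eth p (b * t powi (1 - 2 * int i))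
         * ell q p (b * t powi (1 - 2 * int i)) (int m + int l)
         / ell q p (b * q * t powi (- 2 * int i)) (int m + int l)
         * t powi (int i * (int m - int l)))"
proof -
  define c where "c = b * t powi (1 - 2 * int i)"
  define k where "k = int i * (int m - int l)"
  have c_nz: "c \<noteq> 0" "c * q powi (2 * int m) \<noteq> 0" "c * (q / t) \<noteq> 0"
    unfolding c_def using nz by simp_all
  have args: "inverse b * inverse t powi (1 - 2 * int i) = inverse c"
    "inverse c * inverse q powi (2 * int m) = inverse (c * q powi (2 * int m))"
    "inverse b * inverse q * inverse t powi (- 2 * int i) = inverse (c * (q / t))"
    "b * q * t powi (- 2 * int i) = c * (q / t)"
    "inverse t powi k = inverse (t powi k)"
    using power_int_add[of t 1 "- 2 * int i"] nz unfolding c_def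
    by (simp_all add: power_int_inverse field_simps)
  have mono: "c / (c * q powi (2 * int m)) * ((c * (q / t)) / c) ^ (m + l) * inverse (t powi k)
      = laurent_monomial q t a b (int l - int m) (- int m - int l - 2 * k) 0 0 * t powi k"
  proof -
    have "c / (c * q powi (2 * int m)) = laurent_monomial q t a b (- 2 * int m) 0 0 0"
      "(c * (q / t)) / c = laurent_monomial q t a b 1 (- 1) 0 0"
      "inverse (t powi k) = laurent_monomial q t a b 0 (- k) 0 0"
      "t powi k = laurent_monomial q t a b 0 k 0 0"
      unfolding laurent_monomial_def using c_nz nz by (simp_all add: power_int_minus field_simps)
    then show ?thesis
      by (simp add: laurent_monomial_power laurent_monomial_mult[OF nz] algebra_simps)
  qed
  have "Eth p (inverse (c * q powi (2 * int m))) / Eth p (inverse c)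
         * ell (inverse q) p (inverse c) (int (m + l)) / ell (inverse q) p (inverse (c * (q / t))) (int (m + l))
         * inverse (t powi k)
      = c / (c * q powi (2 * int m)) * ((c * (q / t)) / c) ^ (m + l) * inverse (t powi k)
        * (Eth p (c * q powi (2 * int m)) / Eth p c
           * (ell q p c (int (m + l)) / ell q p (c * (q / t)) (int (m + l))))"
    unfolding times_divide_eq_right[symmetric] Eth_inverse_ratio[OF p c_nz(1,2)]
      ell_inverse_ratio[OF p nz(1) c_nz(3,1)]
    by (simp only: mult_ac)
  also have "\<dots> = laurent_monomial q t a b (int l - int m) (- int m - int l - 2 * k) 0 0
      * (Eth p (c * q powi (2 * int m)) / Eth p c
         * ell q p c (int (m + l)) / ell q p (c * (q / t)) (int (m + l)) * t powi k)"
    unfolding mono by (simp only: times_divide_eq_right mult_ac)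
  finally show ?thesis
    unfolding args c_def[symmetric] k_def[symmetric] of_nat_add[symmetric] args .
qed

lemma W1_diag_factor_inverse:
  assumes p: "norm p < 1" and nz: "q \<noteq> 0" "t \<noteq> 0" "a \<noteq> 0" "b \<noteq> 0"
  shows "W1_diag_factor n (inverse q) p (inverse t) (inverse b) la mu
    = laurent_monomial q t a b (\<Sum>i\<in>{1..n}. int (la (Suc i)) - int (mu i))
        (\<Sum>i\<in>{1..n}. - int (mu i) - int (la (Suc i)) - 2 * (int i * (int (mu i) - int (la (Suc i))))) 0 0
      * W1_diag_factor n q p t b la mu"
  unfolding W1_diag_factor_def W1_diag_term_inverse[OF p nz] prod.distrib laurent_monomial_prod[OF nz]
  by (simp only: sum.neutral_const)

lemma interlace_sum_diff:
  assumes "interlace n la mu"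
  shows "int (\<Sum>i\<in>{1..n}. mu i - la (Suc i))
    = (\<Sum>i\<in>{1..n}. int (mu i)) - (\<Sum>i\<in>{1..n}. int (la (Suc i)))"
proof -
  have "int (mu i - la (Suc i)) = int (mu i) - int (la (Suc i))" if "i \<in> {1..n}" for i
    using interlace_le(1)[OF assms, of i] that by auto
  then show ?thesis
    unfolding of_nat_sum sum_subtractf[symmetric] by (rule sum.cong[OF refl])
qed

lemma W1_inverse_monomial:
  assumes nz: "q \<noteq> 0" "t \<noteq> 0" "a \<noteq> 0" "b \<noteq> 0" and il: "interlace n la mu"
  shows "(q / t) ^ (\<Sum>i\<in>{1..n}. mu i - la (Suc i))
      * laurent_monomial q t a b (2 * int (part_size n la) - 2 * int (part_size n mu)) (2 * int (part_size n mu))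
          (2 * int (part_size n mu) - 2 * int (part_size n la)) (2 * int (part_size n la) - 2 * int (part_size n mu))
      * laurent_monomial q t a b (\<Sum>i\<in>{1..n}. int (la (Suc i)) - int (mu i))
          (\<Sum>i\<in>{1..n}. - int (mu i) - int (la (Suc i)) - 2 * (int i * (int (mu i) - int (la (Suc i))))) 0 0
    = laurent_monomial q t a b (2 * int (part_size n la) - 2 * int (part_size n mu))
        (2 * int (part_n n la) - 2 * int (part_n n mu) - 2 * int (part_size n mu))
        (2 * int (part_size n mu) - 2 * int (part_size n la))
        (2 * int (part_size n la) - 2 * int (part_size n mu))"
proof -
  have "la (Suc n) = 0"
    using il unfolding interlace_def npart_def by simp
  note D = interlace_sum_diff[OF il]
  have "(\<Sum>i\<in>{1..n}. int i * int (la (Suc i))) = int (part_n n la)"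
    unfolding of_nat_mult[symmetric] of_nat_sum[symmetric] part_n_shift[of la n, OF \<open>la (Suc n) = 0\<close>] ..
  moreover have "(\<Sum>i\<in>{1..n}. int i * int (mu i)) = int (part_n n mu) + int (part_size n mu)"
    unfolding of_nat_mult[symmetric] of_nat_sum[symmetric] part_n_plus_size by simp
  moreover have "(\<Sum>i\<in>{1..n}. - int (mu i) - int (la (Suc i)) - 2 * (int i * (int (mu i) - int (la (Suc i)))))
      = 2 * (\<Sum>i\<in>{1..n}. int i * int (la (Suc i))) - 2 * (\<Sum>i\<in>{1..n}. int i * int (mu i))
        - (\<Sum>i\<in>{1..n}. int (mu i)) - (\<Sum>i\<in>{1..n}. int (la (Suc i)))"
    by (simp add: sum_subtractf sum.distrib sum_distrib_left algebra_simps)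
  moreover have "int (part_size n mu) = (\<Sum>i\<in>{1..n}. int (mu i))"
    unfolding part_size_def by simp
  ultimately have exponent_t: "- int (\<Sum>i\<in>{1..n}. mu i - la (Suc i)) + 2 * int (part_size n mu)
      + (\<Sum>i\<in>{1..n}. - int (mu i) - int (la (Suc i)) - 2 * (int i * (int (mu i) - int (la (Suc i)))))
    = 2 * int (part_n n la) - 2 * int (part_n n mu) - 2 * int (part_size n mu)"
    using D by linarith
  have exponent_q: "int (\<Sum>i\<in>{1..n}. mu i - la (Suc i)) + (2 * int (part_size n la) - 2 * int (part_size n mu))
      + (\<Sum>i\<in>{1..n}. int (la (Suc i)) - int (mu i))
    = 2 * int (part_size n la) - 2 * int (part_size n mu)"
    using D \<open>int (part_size n mu) = (\<Sum>i\<in>{1..n}. int (mu i))\<close> by (simp add: sum_subtractf)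
  have qt_power: "(q / t) ^ m = laurent_monomial q t a b (int m) (- int m) 0 0" for m
    unfolding laurent_monomial_def using nz by (simp add: power_int_minus power_divide field_simps)
  show ?thesis
    unfolding qt_power laurent_monomial_mult[OF nz(1-4)] exponent_q exponent_t by simp
qed

lemma W1_inverse:
  assumes p: "norm p < 1" and nz: "q \<noteq> 0" "t \<noteq> 0" "a \<noteq> 0" "b \<noteq> 0" "x \<noteq> 0"
    and "mu n = 0"
  shows "W1 n (inverse q) p (inverse t) (inverse a) (inverse b) la mu (inverse x)
    = laurent_monomial q t a b (2 * int (part_size n la) - 2 * int (part_size n mu))
        (2 * int (part_n n la) - 2 * int (part_n n mu) - 2 * int (part_size n mu))
        (2 * int (part_size n mu) - 2 * int (part_size n la))
        (2 * int (part_size n la) - 2 * int (part_size n mu))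
      * W1 n q p t a b la mu x"
proof (cases "interlace n la mu")
  case False
  then show ?thesis
    by (simp add: W1_def)
next
  case il: True
  show ?thesis
    unfolding W1_factorization if_P[OF il] Hfac_inverse[OF p nz(1,2,4) il \<open>mu n = 0\<close>]
      W1_ellp_factor_inverse[OF p nz] W1_diag_factor_inverse[OF p nz(1-4)]
      W1_inverse_monomial[OF nz(1-4) il, symmetric]
    by (simp only: mult_ac)
qed

section \<open>The branching rule\<close>

lemma Wl_nonzero_support:
  assumes "Wl n q p t a b zs nu (\<lambda>_. 0) \<noteq> 0" "length zs < i"
  shows "nu i = 0"
  using assms
proof (induction zs arbitrary: nu i)
  case Nil
  then show ?case
    by (simp split: if_splits)
next
  case (Cons z zs)
  then obtain nu' where nu': "interlace n nu nu'" and "Wl n q p t a b zs nu' (\<lambda>_. 0) \<noteq> 0"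
    by (auto elim: sum.not_neutral_contains_not_neutral)
  then have "nu' (i - 1) = 0"
    using Cons.IH Cons.prems(2) by simp
  show ?case
  proof (cases "n < i")
    case True
    then show ?thesis
      using nu' unfolding interlace_def npart_def by simp
  next
    case False
    then have "nu (Suc (i - 1)) \<le> nu' (i - 1)"
      using interlace_le(1)[OF nu', of "i - 1"] Cons.prems(2) by simp
    then show ?thesis
      using \<open>nu' (i - 1) = 0\<close> Cons.prems(2) by simp
  qed
qed

lemma Wl_inverse:
  assumes p: "norm p < 1" and nz: "q \<noteq> 0" "t \<noteq> 0" "a \<noteq> 0" "b \<noteq> 0"
    and "\<forall>x\<in>set zs. x \<noteq> 0" "length zs \<le> n"
  shows "Wl n (inverse q) p (inverse t) (inverse a) (inverse b) (map inverse zs) la (\<lambda>_. 0)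
    = laurent_monomial q t a b (2 * int (part_size n la))
        (2 * int (part_n n la) - 2 * (int (length zs) - 1) * int (part_size n la))
        (- 2 * int (part_size n la)) (2 * int (part_size n la))
      * Wl n q p t a b zs la (\<lambda>_. 0)"
  using assms(6,7)
proof (induction zs arbitrary: la)
  case Nil
  then show ?case
    by (simp add: laurent_monomial_def part_size_def part_n_def)
next
  case (Cons z zs)
  define l where "l = length zs"
  have args: "inverse a * inverse t ^ (2 * l) = inverse (a * t ^ (2 * l))"
    "inverse b * inverse t ^ l = inverse (b * t ^ l)"
    "inverse z * inverse t powi (- int l) = inverse (z * t powi (- int l))"
    by (simp_all add: power_inverse power_int_inverse)
  have nz': "a * t ^ (2 * l) \<noteq> 0" "b * t ^ l \<noteq> 0" "z * t powi (- int l) \<noteq> 0"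
    using nz Cons.prems by auto
  show ?case
    unfolding list.map Wl.simps length_map length_Cons l_def[symmetric] args sum_distrib_left
  proof (intro sum.cong refl)
    fix nu
    show "W1 n (inverse q) p (inverse t) (inverse (a * t ^ (2 * l))) (inverse (b * t ^ l)) la nu
          (inverse (z * t powi - int l))
        * Wl n (inverse q) p (inverse t) (inverse a) (inverse b) (map inverse zs) nu (\<lambda>_. 0)
      = laurent_monomial q t a b (2 * int (part_size n la))
          (2 * int (part_n n la) - 2 * (int (Suc l) - 1) * int (part_size n la))
          (- 2 * int (part_size n la)) (2 * int (part_size n la))
        * (W1 n q p t (a * t ^ (2 * l)) (b * t ^ l) la nu (z * t powi - int l)
           * Wl n q p t a b zs nu (\<lambda>_. 0))"
    proof (cases "Wl n q p t a b zs nu (\<lambda>_. 0) = 0")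
      case True
      then show ?thesis
        using Cons unfolding l_def by simp
    next
      case False
      then have "nu n = 0"
        using Wl_nonzero_support Cons.prems(2) unfolding l_def by simp
      have "laurent_monomial q t (a * t ^ (2 * l)) (b * t ^ l)
            (2 * int (part_size n la) - 2 * int (part_size n nu))
            (2 * int (part_n n la) - 2 * int (part_n n nu) - 2 * int (part_size n nu))
            (2 * int (part_size n nu) - 2 * int (part_size n la))
            (2 * int (part_size n la) - 2 * int (part_size n nu))
          * laurent_monomial q t a b (2 * int (part_size n nu))
            (2 * int (part_n n nu) - 2 * (int l - 1) * int (part_size n nu))
            (- 2 * int (part_size n nu)) (2 * int (part_size n nu))
        = laurent_monomial q t a b (2 * int (part_size n la))
            (2 * int (part_n n la) - 2 * (int (Suc l) - 1) * int (part_size n la))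
            (- 2 * int (part_size n la)) (2 * int (part_size n la))"
        unfolding laurent_monomial_shift[OF nz(2-4)] laurent_monomial_mult[OF nz]
        by (simp add: algebra_simps)
      moreover have "Wl n (inverse q) p (inverse t) (inverse a) (inverse b) (map inverse zs) nu (\<lambda>_. 0)
        = laurent_monomial q t a b (2 * int (part_size n nu))
            (2 * int (part_n n nu) - 2 * (int l - 1) * int (part_size n nu))
            (- 2 * int (part_size n nu)) (2 * int (part_size n nu))
          * Wl n q p t a b zs nu (\<lambda>_. 0)"
        using Cons.prems unfolding l_def by (intro Cons.IH) auto
      ultimately show ?thesis
        unfolding W1_inverse[where mu = nu, OF p nz(1,2) nz' \<open>nu n = 0\<close>]
        by (simp only: mult_ac)
    qed
  qed
qed

theorem mainTheorem9:
  fixes n :: nat and la :: "nat \<Rightarrow> nat" and xs :: "complex list"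
    and p q t a b :: complex
  assumes "norm p < 1"
    and "generic p q t a b xs"
    and "npart n la"
    and "length xs = n"
  shows "Wl n (inverse q) p (inverse t) (inverse a) (inverse b) (map inverse xs) la (\<lambda>_. 0)
         = a powi (- 2 * int (\<Sum>i\<in>{1..n}. la i)) * b ^ (2 * (\<Sum>i\<in>{1..n}. la i))
           * q ^ (2 * (\<Sum>i\<in>{1..n}. la i))
           * t powi (2 * int (\<Sum>i\<in>{1..n}. (i - 1) * la i) - 2 * (int n - 1) * int (\<Sum>i\<in>{1..n}. la i))
           * Wl n q p t a b xs la (\<lambda>_. 0)"
proof -
  have nz: "q \<noteq> 0" "t \<noteq> 0" "a \<noteq> 0" "b \<noteq> 0" "\<forall>x\<in>set xs. x \<noteq> 0"
    using assms(2) unfolding generic_def by auto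
  have "x powi (2 * int (part_size n la)) = x ^ (2 * part_size n la)" for x :: complex
    by (metis of_nat_mult of_nat_numeral power_int_of_nat)
  then have "laurent_monomial q t a b (2 * int (part_size n la))
      (2 * int (part_n n la) - 2 * (int (length xs) - 1) * int (part_size n la))
      (- 2 * int (part_size n la)) (2 * int (part_size n la))
    = a powi (- 2 * int (\<Sum>i\<in>{1..n}. la i)) * b ^ (2 * (\<Sum>i\<in>{1..n}. la i))
      * q ^ (2 * (\<Sum>i\<in>{1..n}. la i))
      * t powi (2 * int (\<Sum>i\<in>{1..n}. (i - 1) * la i) - 2 * (int n - 1) * int (\<Sum>i\<in>{1..n}. la i))"
    unfolding laurent_monomial_def assms(4) by (simp add: part_size_def part_n_def ac_simps)
  then show ?thesis
    using Wl_inverse[OF assms(1) nz] assms(4) by simp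
qed

end
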